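(* Let $A\subseteq\mathbb{R}^n$ be finite (Euclidean metric) and $\beta>0$. For all $r,k>0$: (i) $\mathrm{DCr}^\beta_{r,k}(A)\subseteq\mathrm{Cov}_{(1+\beta^{-1})r,k}(A)$, and (ii) $\mathrm{Cov}_{r,k}(A)\subseteq\mathrm{DCr}^\beta_{\max\{1,2\beta\}r,k}(A)$.
   Context: $d$ Euclidean, $\bar B_d(x,r)=\{y:d(x,y)\le r\}$. For finite $A$, $k>0$, $x\in\mathbb{R}^n$, $\mathrm{core}^A_k(x)$ is the distance from $x$ to its $\lceil k\rceil$-th nearest neighbor in $A$ (each point of $A$ counted once, $x$ itself counting if $x\in A$); equivalently $\min\{r\ge0:|\bar B_d(x,r)\cap A|\ge k\}$, and $\infty$ if $k>|A|$. Multicover: $\mathrm{Cov}_{r,k}(A)=\{x:|\bar B_d(x,r)\cap A|\ge k\}$. For $\beta>0$: $\Lambda^\beta_k(a,x)=\max\{\beta\,\mathrm{core}^A_k(a),d(a,x)\}$, $B^\beta_{r,k}(a)=\{x:\Lambda^\beta_k(a,x)\le r\}$. $\mathrm{Vor}_A(a)=\{x:d(a,x)\le d(a',x)\ \forall a'\in A\}$. Delaunay core bifiltration: $\mathrm{DCr}^\beta_{r,k}(A)=\bigcup_{a\in A}\big(B^\beta_{r,k}(a)\cap\mathrm{Vor}_A(a)\big)$. *)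

theory Defs
  imports "HOL-Analysis.Analysis" "HOL-Library.Extended_Real"
begin

text \<open>Distance from x to its ceil(k)-th nearest neighbour in A; infinity if k exceeds card A.\<close>
definition core :: "'a::metric_space set \<Rightarrow> real \<Rightarrow> 'a \<Rightarrow> ereal" where
  "core A k x = (if real (card A) < k then \<infinity>
     else ereal (Inf {r. r \<ge> 0 \<and> real (card (cball x r \<inter> A)) \<ge> k}))"

definition Cov :: "'a::metric_space set \<Rightarrow> real \<Rightarrow> real \<Rightarrow> 'a set" where
  "Cov A r k = {x. real (card (cball x r \<inter> A)) \<ge> k}"

definition Lambda :: "'a::metric_space set \<Rightarrow> real \<Rightarrow> real \<Rightarrow> 'a \<Rightarrow> 'a \<Rightarrow> ereal" where
  "Lambda A \<beta> k a x = max (ereal \<beta> * core A k a) (ereal (dist a x))"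

definition Bcore :: "'a::metric_space set \<Rightarrow> real \<Rightarrow> real \<Rightarrow> real \<Rightarrow> 'a \<Rightarrow> 'a set" where
  "Bcore A \<beta> r k a = {x. Lambda A \<beta> k a x \<le> ereal r}"

definition Vor :: "'a::metric_space set \<Rightarrow> 'a \<Rightarrow> 'a set" where
  "Vor A a = {x. \<forall>a'\<in>A. dist a x \<le> dist a' x}"

definition DCr :: "'a::metric_space set \<Rightarrow> real \<Rightarrow> real \<Rightarrow> real \<Rightarrow> 'a set" where
  "DCr A \<beta> r k = (\<Union>a\<in>A. Bcore A \<beta> r k a \<inter> Vor A a)"

end

theory Submission
  imports Defs
begin

text \<open>Everything rests on one observation: for finite A, the core distance of a is at most s
  exactly when the closed ball of radius s around a contains at least k points of A. For (i),
  a point x of the Delaunay core cell of a lies within r of a, and the ball of radius r/\<beta>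
  around a, which holds k points, lies in the ball of radius (1 + 1/\<beta>) r around x. For (ii),
  x lies in the Voronoi cell of a nearest point a of A, which is within r of x, so the ball of
  radius r around x, holding k points, lies in the ball of radius 2r around a; hence
  \<beta> core(a) \<le> 2\<beta>r.\<close>

lemma card_cball_Int_mono:
  assumes "finite A" and "cball x r \<subseteq> cball y s"
  shows "card (cball x r \<inter> A) \<le> card (cball y s \<inter> A)"
  using assms by (intro card_mono) auto

lemma cball_subset_cball_dist:
  fixes x y :: "'a::metric_space"
  assumes "dist x y + r \<le> s"
  shows "cball y r \<subseteq> cball x s"
proof
  fix z assume "z \<in> cball y r"
  then have "dist x z \<le> dist x y + r"
    using dist_triangle[of x z y] by (simp add: mem_cball)
  with assms show "z \<in> cball x s" by (simp add: mem_cball)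
qed

text \<open>For finite A the number of points of A in cball x s only jumps at the finitely many
  distances from x to A, so the infimum defining the core distance is a minimum.\<close>

lemma Inf_card_cball_attained:
  fixes A :: "'a::metric_space set"
  assumes "finite A" and "S = {s. 0 \<le> s \<and> k \<le> real (card (cball x s \<inter> A))}"
    and "S \<noteq> {}"
  shows "Inf S \<in> S"
proof -
  define c where "c = Inf S"
  have "0 \<le> c" unfolding c_def using \<open>S \<noteq> {}\<close> by (intro cInf_greatest) (auto simp: assms(2))
  define D where "D = {dist x a | a. a \<in> A \<and> c < dist x a}"
  have "finite D" unfolding D_def using assms(1) by auto
  define next_dist where "next_dist = (if D = {} then c + 1 else Min D)"
  have "c < next_dist" using \<open>finite D\<close> by (auto simp: next_dist_def D_def)
  then obtain s where s: "s \<in> S" "s < next_dist"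
    using \<open>S \<noteq> {}\<close> unfolding c_def by (meson cInf_lessD)
  have "cball x s \<inter> A \<subseteq> cball x c \<inter> A"
  proof
    fix a assume a: "a \<in> cball x s \<inter> A"
    show "a \<in> cball x c \<inter> A"
    proof (rule ccontr)
      assume "a \<notin> cball x c \<inter> A"
      then have "dist x a \<in> D" using a by (auto simp: D_def mem_cball)
      then have "next_dist \<le> dist x a" using \<open>finite D\<close> by (auto simp: next_dist_def)
      with a s show False by (auto simp: mem_cball)
    qed
  qed
  then have "card (cball x s \<inter> A) \<le> card (cball x c \<inter> A)"
    using assms(1) by (intro card_mono) auto
  with s(1) \<open>0 \<le> c\<close> show ?thesis unfolding c_def assms(2) by auto
qed

lemma core_le_ereal_iff:
  fixes A :: "'a::metric_space set"
  assumes "finite A" and "0 \<le> s"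
  shows "core A k x \<le> ereal s \<longleftrightarrow> k \<le> real (card (cball x s \<inter> A))"
proof (cases "real (card A) < k")
  case True
  have "card (cball x s \<inter> A) \<le> card A" using assms(1) by (intro card_mono) auto
  with True show ?thesis by (simp add: core_def)
next
  case False
  define S where "S = {s. 0 \<le> s \<and> k \<le> real (card (cball x s \<inter> A))}"
  have "s \<in> S \<longleftrightarrow> k \<le> real (card (cball x s \<inter> A))" using assms(2) by (simp add: S_def)
  moreover have "Inf S \<le> s \<longleftrightarrow> s \<in> S"
  proof
    have "A \<subseteq> cball x (Max (insert 0 (dist x ` A)))"
      using assms(1) by (auto simp: mem_cball)
    then have "Max (insert 0 (dist x ` A)) \<in> S"
      using False assms(1) by (auto simp: S_def Int_absorb1)
    then have "Inf S \<in> S" by (intro Inf_card_cball_attained[OF assms(1) S_def]) auto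
    moreover assume "Inf S \<le> s"
    then have "card (cball x (Inf S) \<inter> A) \<le> card (cball x s \<inter> A)"
      by (intro card_cball_Int_mono[OF assms(1)] subset_cball)
    ultimately show "s \<in> S" using assms(2) by (auto simp: S_def)
  next
    show "s \<in> S \<Longrightarrow> Inf S \<le> s" by (rule cInf_lower) (auto simp: S_def intro: bdd_belowI[of _ 0])
  qed
  ultimately show ?thesis using False by (simp add: core_def S_def)
qed

lemma ex_Vor_mem:
  assumes "finite A" and "A \<noteq> {}"
  obtains a where "a \<in> A" and "x \<in> Vor A a"
  using ex_min_if_finite[of "(\<lambda>a. dist a x) ` A"] assms
  by (fastforce simp: Vor_def)

lemma DCr_subset_Cov:
  fixes A :: "'a::metric_space set"
  assumes "finite A" and "\<beta> > 0" and "r > 0"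
  shows "DCr A \<beta> r k \<subseteq> Cov A ((1 + 1 / \<beta>) * r) k"
proof
  fix x assume "x \<in> DCr A \<beta> r k"
  then obtain a where "a \<in> A" and "Lambda A \<beta> k a x \<le> ereal r"
    by (auto simp: DCr_def Bcore_def)
  then have dist_ax: "dist a x \<le> r" and "ereal \<beta> * core A k a \<le> ereal r"
    by (auto simp: Lambda_def)
  then have "core A k a \<le> ereal (r / \<beta>)"
    using \<open>\<beta> > 0\<close> by (cases "core A k a") (auto simp: field_simps)
  then have "k \<le> real (card (cball a (r / \<beta>) \<inter> A))"
    using assms by (simp add: core_le_ereal_iff)
  also have "\<dots> \<le> real (card (cball x ((1 + 1 / \<beta>) * r) \<inter> A))"
    using dist_ax by (intro of_nat_mono card_cball_Int_mono[OF \<open>finite A\<close>]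
        cball_subset_cball_dist) (simp add: dist_commute algebra_simps)
  finally show "x \<in> Cov A ((1 + 1 / \<beta>) * r) k" by (simp add: Cov_def)
qed

lemma Cov_subset_DCr:
  fixes A :: "'a::metric_space set"
  assumes "finite A" and "\<beta> > 0" and "r > 0" and "k > 0"
  shows "Cov A r k \<subseteq> DCr A \<beta> (max 1 (2 * \<beta>) * r) k"
proof
  fix x assume "x \<in> Cov A r k"
  then have k_le: "k \<le> real (card (cball x r \<inter> A))" by (simp add: Cov_def)
  with \<open>k > 0\<close> have "cball x r \<inter> A \<noteq> {}" by auto
  then obtain b where "b \<in> A" and "dist x b \<le> r" by (auto simp: mem_cball)
  then obtain a where "a \<in> A" and vor: "x \<in> Vor A a"
    using ex_Vor_mem[OF \<open>finite A\<close>] by blast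
  with \<open>b \<in> A\<close> \<open>dist x b \<le> r\<close> have dist_ax: "dist a x \<le> r"
    by (auto simp: Vor_def dist_commute)
  have "k \<le> real (card (cball a (2 * r) \<inter> A))"
    using k_le dist_ax by (elim order_trans, intro of_nat_mono card_cball_Int_mono[OF \<open>finite A\<close>]
        cball_subset_cball_dist) (simp add: dist_commute)
  then have "core A k a \<le> ereal (2 * r)"
    using assms by (simp add: core_le_ereal_iff)
  then obtain c where core: "core A k a = ereal c" and "c \<le> 2 * r"
    by (cases "core A k a") (auto simp: core_def split: if_split_asm)
  then have "\<beta> * c \<le> 2 * \<beta> * r" using \<open>\<beta> > 0\<close> by simp
  also have "\<dots> \<le> max 1 (2 * \<beta>) * r" using \<open>r > 0\<close> by (intro mult_right_mono) auto
  finally have "ereal \<beta> * core A k a \<le> ereal (max 1 (2 * \<beta>) * r)" by (simp add: core)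
  moreover have "dist a x \<le> max 1 (2 * \<beta>) * r"
  proof -
    have "1 * r \<le> max 1 (2 * \<beta>) * r" using \<open>r > 0\<close> by (intro mult_right_mono) auto
    with dist_ax show ?thesis by simp
  qed
  ultimately show "x \<in> DCr A \<beta> (max 1 (2 * \<beta>) * r) k"
    using \<open>a \<in> A\<close> vor by (auto simp: DCr_def Bcore_def Lambda_def)
qed

theorem mainTheorem7:
  fixes A :: "'a::euclidean_space set" and \<beta> r k :: real
  assumes "finite A" and "\<beta> > 0" and "r > 0" and "k > 0"
  shows "DCr A \<beta> r k \<subseteq> Cov A ((1 + 1 / \<beta>) * r) k \<and>
         Cov A r k \<subseteq> DCr A \<beta> (max 1 (2 * \<beta>) * r) k"
  using DCr_subset_Cov[of A \<beta> r k] Cov_subset_DCr[of A \<beta> r k] assms by blast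

end
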